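(* Let $A$ be an integral domain with quotient field $K$, so that $\mathrm{reg}(A) = A\setminus\{0\}$. Then the following are equivalent: (a) $A$ is Egyptian. (b) $A$ is the only $\mathrm{reg}(A)$-regular $\mathrm{reg}(A)$-factroid of $A$ containing $1$. (c) $K$ is the only $\mathrm{reg}(A)$-factroid of $K$ (viewed as an $A$-module) containing $1$. More generally, the Egyptian elements of $A$ (resp., $K$) are precisely the elements of the smallest $\mathrm{reg}(A)$-regular $\mathrm{reg}(A)$-factroid $G^{\mathrm{reg}(A)}_A(1)$ of $A$ (resp., the smallest $\mathrm{reg}(A)$-factroid $[1]^{\mathrm{reg}(A)}_K$ of $K$) containing $1$.
   Context: For a subset $T$ of a ring $A$ and an $A$-module $M$, a $T$-factroid of $M$ is an additive subgroup $F$ of $M$ such that for all $x\in M$ and $t\in T$, $tx\in F$ implies $x\in F$; $[S]^T_M$ denotes the smallest $T$-factroid of $M$ containing $S\subseteq M$. For a multiplicative set $W$ and $T\subseteq A$, a $W$-factroid $F$ of $M$ is $T$-regular if for all $h\in T$ and $x\in M$, $hx\in[hF]^W_M$ implies $x\in F$ (where $hF=\{hy\mid y\in F\}$). $G^{W}_A(1):=\{a\in A\mid ha\in[h]^W_A \text{ for some } h\in W\}$. $\mathrm{reg}(A)$ is the set of nonzerodivisors of $A$. The reciprocal complement $R(A)$ is the set of all finite sums $\frac{1}{d_1}+\cdots+\frac{1}{d_n}\in K$ with $d_i\in A\setminus\{0\}$; an element of $K$ is Egyptian if it lies in $R(A)$, an element $a\in A$ is Egyptian if $a\in R(A)$, and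 $A$ is Egyptian if every element of $A$ (equivalently of $K$) is Egyptian. *)

theory Defs
  imports "HOL-Computational_Algebra.Fraction_Field"
begin

text \<open>A-modules are given by a scalar action act of the ring on an abelian group.\<close>

definition add_subgroup :: "'m::ab_group_add set \<Rightarrow> bool" where
  "add_subgroup F \<longleftrightarrow> 0 \<in> F \<and> (\<forall>x\<in>F. \<forall>y\<in>F. x + y \<in> F) \<and> (\<forall>x\<in>F. - x \<in> F)"

definition factroid :: "('a \<Rightarrow> 'm \<Rightarrow> 'm) \<Rightarrow> 'a set \<Rightarrow> 'm::ab_group_add set \<Rightarrow> bool" where
  "factroid act T F \<longleftrightarrow> add_subgroup F \<and> (\<forall>x t. t \<in> T \<longrightarrow> act t x \<in> F \<longrightarrow> x \<in> F)"

definition factroid_gen :: "('a \<Rightarrow> 'm \<Rightarrow> 'm) \<Rightarrow> 'a set \<Rightarrow> 'm::ab_group_add set \<Rightarrow> 'm set" where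
  "factroid_gen act T S = \<Inter>{F. factroid act T F \<and> S \<subseteq> F}"

definition factroid_regular :: "('a \<Rightarrow> 'm \<Rightarrow> 'm) \<Rightarrow> 'a set \<Rightarrow> 'a set \<Rightarrow> 'm::ab_group_add set \<Rightarrow> bool" where
  "factroid_regular act W T F \<longleftrightarrow>
     (\<forall>h\<in>T. \<forall>x. act h x \<in> factroid_gen act W (act h ` F) \<longrightarrow> x \<in> F)"

definition G_one :: "'a set \<Rightarrow> 'a::comm_ring_1 set" where
  "G_one W = {a. \<exists>h\<in>W. h * a \<in> factroid_gen (*) W {h}}"

definition reg :: "'a::comm_ring_1 set" where
  "reg = {a. \<forall>b. a * b = 0 \<longrightarrow> b = 0}"

definition emb :: "'a::idom \<Rightarrow> 'a fract" where
  "emb a = Fract a 1"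

definition recip_compl :: "'a::idom fract set" where
  "recip_compl = {x. \<exists>ds. (\<forall>d\<in>set ds. d \<noteq> 0) \<and>
                         x = sum_list (map (\<lambda>d. inverse (emb d)) ds)}"

definition egyptian_domain :: "'a::idom itself \<Rightarrow> bool" where
  "egyptian_domain _ \<longleftrightarrow> (\<forall>a::'a. emb a \<in> recip_compl)"

end

theory Submission
  imports Defs
begin

text \<open>
  The reciprocal complement \<open>R(A)\<close> is an additive group containing \<open>1\<close> from which one may
  cancel nonzero factors, so it is a factroid of \<open>K\<close>; conversely any factroid of \<open>K\<close>
  containing \<open>1 = d \<cdot> (1/d)\<close> contains every unit fraction \<open>1/d\<close>, hence \<open>R(A) = [1]\<^sub>K\<close>.

  For \<open>G(1)\<close>: since \<open>{y. y/h \<in> R(A)}\<close> is a factroid of \<open>A\<close> containing \<open>h\<close>, every element of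
  \<open>[h]\<^sub>A\<close> is \<open>h\<close> times an Egyptian element, so \<open>G(1)\<close> consists of Egyptian elements; the same
  argument shows that the Egyptian elements form a regular factroid. Conversely, if
  \<open>y \<in> [h]\<close> and \<open>y = h s\<close> in \<open>K\<close>, then \<open>h + d y \<in> [d h]\<close> and \<open>h + d y = d h (1/d + s)\<close>, so by
  induction every Egyptian sum \<open>s\<close> satisfies \<open>h s \<in> [h]\<close> for a suitable \<open>h \<noteq> 0\<close>.
  The equivalences then hold because \<open>G(1)\<close> and \<open>[1]\<^sub>K\<close> are the least factroids in question.
\<close>

lemma reg_eq_nonzero: "(reg :: 'a::idom set) = {a. a \<noteq> 0}"
  unfolding reg_def by (auto, metis mult_zero_left one_neq_zero)

lemma factroid_UNIV: "factroid act T UNIV"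
  by (simp add: factroid_def add_subgroup_def)

lemma factroid_regular_UNIV: "factroid_regular act W T UNIV"
  by (simp add: factroid_regular_def)

lemma factroid_zero: "factroid act T F \<Longrightarrow> 0 \<in> F"
  by (simp add: factroid_def add_subgroup_def)

lemma factroid_add: "factroid act T F \<Longrightarrow> x \<in> F \<Longrightarrow> y \<in> F \<Longrightarrow> x + y \<in> F"
  by (simp add: factroid_def add_subgroup_def)

lemma factroid_cancel: "factroid act T F \<Longrightarrow> t \<in> T \<Longrightarrow> act t x \<in> F \<Longrightarrow> x \<in> F"
  by (simp add: factroid_def)

lemma factroid_factroid_gen: "factroid act T (factroid_gen act T S)"
  unfolding factroid_gen_def factroid_def add_subgroup_def by blast

lemma subset_factroid_gen: "S \<subseteq> factroid_gen act T S"
  unfolding factroid_gen_def by auto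

lemma factroid_gen_least: "factroid act T F \<Longrightarrow> S \<subseteq> F \<Longrightarrow> factroid_gen act T S \<subseteq> F"
  unfolding factroid_gen_def by auto

lemma factroid_vimage:
  fixes f :: "'m::ab_group_add \<Rightarrow> 'n::ab_group_add"
  assumes F: "factroid act T F"
    and add: "\<And>x y. f (x + y) = f x + f y"
    and act: "\<And>t x. t \<in> T \<Longrightarrow> f (act' t x) = act t (f x)"
  shows "factroid act' T (f -` F)"
proof -
  have zero: "f 0 = 0"
    using add[of 0 0] by simp
  have minus: "f (- x) = - f x" for x
    using add[of x "- x"] zero by (simp add: add.commute eq_neg_iff_add_eq_0)
  show ?thesis
    using F unfolding factroid_def add_subgroup_def by (simp add: zero minus add act)
qed

lemma factroid_gen_singleton_times:
  fixes c h :: "'a::comm_ring_1"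
  shows "factroid_gen (*) T {h} \<subseteq> (\<lambda>z. c * z) -` factroid_gen (*) T {c * h}"
  by (rule factroid_gen_least[OF factroid_vimage[OF factroid_factroid_gen]])
     (auto simp: algebra_simps intro: subset_factroid_gen[THEN subsetD])

lemma mem_factroid_gen_singleton_factor:
  fixes t h :: "'a::comm_ring_1"
  assumes "t \<in> T"
  shows "h \<in> factroid_gen (*) T {t * h}"
  by (rule factroid_cancel[OF factroid_factroid_gen assms]) (simp add: subset_factroid_gen[THEN subsetD])

lemma G_one_least:
  fixes F :: "'a::comm_ring_1 set"
  assumes F: "factroid_regular (*) W W F" and one: "1 \<in> F"
  shows "G_one W \<subseteq> F"
proof
  fix a assume "a \<in> G_one W"
  then obtain h where h: "h \<in> W" "h * a \<in> factroid_gen (*) W {h}"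
    unfolding G_one_def by auto
  have "factroid_gen (*) W {h} \<subseteq> factroid_gen (*) W ((*) h ` F)"
    using one by (intro factroid_gen_least[OF factroid_factroid_gen])
      (force intro: subset_factroid_gen[THEN subsetD])
  with F h show "a \<in> F"
    unfolding factroid_regular_def by blast
qed

lemma emb_add: "emb (a + b) = emb a + emb b"
  by (simp add: emb_def)

lemma emb_uminus: "emb (- a) = - emb a"
  by (simp add: emb_def)

lemma emb_mult: "emb (a * b) = emb a * emb b"
  by (simp add: emb_def)

lemma emb_1: "emb 1 = 1"
  by (simp add: emb_def One_fract_def)

lemma emb_eq_iff: "emb a = emb b \<longleftrightarrow> a = b"
  by (simp add: emb_def eq_fract)

lemma emb_eq_0_iff: "emb a = 0 \<longleftrightarrow> a = 0"
  by (simp add: emb_def eq_fract Zero_fract_def)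

lemma Fract_eq_emb_divide: "b \<noteq> 0 \<Longrightarrow> Fract a b = emb a / emb b"
  by (simp add: emb_def divide_fract_def)

definition unit_fraction_sum :: "'a::idom list \<Rightarrow> 'a fract" where
  "unit_fraction_sum ds = (\<Sum>d\<leftarrow>ds. inverse (emb d))"

lemma unit_fraction_sum_simps [simp]:
  "unit_fraction_sum [] = 0"
  "unit_fraction_sum (d # ds) = inverse (emb d) + unit_fraction_sum ds"
  "unit_fraction_sum (ds @ es) = unit_fraction_sum ds + unit_fraction_sum es"
  by (simp_all add: unit_fraction_sum_def)

lemma mem_recip_compl_iff:
  "x \<in> recip_compl \<longleftrightarrow> (\<exists>ds. (\<forall>d\<in>set ds. d \<noteq> 0) \<and> x = unit_fraction_sum ds)"
  by (simp add: recip_compl_def unit_fraction_sum_def)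

lemma unit_fraction_sum_map_uminus: "unit_fraction_sum (map uminus ds) = - unit_fraction_sum ds"
  by (induction ds) (simp_all add: emb_uminus)

lemma unit_fraction_sum_map_times:
  "unit_fraction_sum (map ((*) t) ds) = inverse (emb t) * unit_fraction_sum ds"
  by (induction ds) (simp_all add: emb_mult distrib_left)

lemma one_mem_recip_compl: "1 \<in> recip_compl"
  unfolding mem_recip_compl_iff by (intro exI[of _ "[1]"]) (simp add: emb_1)

lemma factroid_recip_compl: "factroid (\<lambda>a x. emb a * x) (reg :: 'a::idom set) recip_compl"
  unfolding factroid_def add_subgroup_def
proof (intro conjI ballI allI impI)
  show "0 \<in> (recip_compl :: 'a fract set)"
    unfolding mem_recip_compl_iff by (intro exI[of _ "[]"]) simp
  show "x + y \<in> recip_compl" if "x \<in> recip_compl" "y \<in> recip_compl" for x y :: "'a fract"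
  proof -
    from that obtain ds es where "\<forall>d\<in>set ds. d \<noteq> 0" "x = unit_fraction_sum ds"
      "\<forall>d\<in>set es. d \<noteq> 0" "y = unit_fraction_sum es"
      unfolding mem_recip_compl_iff by blast
    then show ?thesis
      unfolding mem_recip_compl_iff by (intro exI[of _ "ds @ es"]) auto
  qed
  show "- x \<in> recip_compl" if "x \<in> recip_compl" for x :: "'a fract"
  proof -
    from that obtain ds where "\<forall>d\<in>set ds. d \<noteq> 0" "x = unit_fraction_sum ds"
      unfolding mem_recip_compl_iff by blast
    then show ?thesis
      unfolding mem_recip_compl_iff
      by (intro exI[of _ "map uminus ds"]) (auto simp: unit_fraction_sum_map_uminus)
  qed
  fix t :: 'a and x
  assume "t \<in> reg" "emb t * x \<in> recip_compl"
  then obtain ds where t: "t \<noteq> 0" and ds: "\<forall>d\<in>set ds. d \<noteq> 0" "emb t * x = unit_fraction_sum ds"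
    by (auto simp: reg_eq_nonzero mem_recip_compl_iff)
  then have "x = unit_fraction_sum (map ((*) t) ds)"
    by (simp add: unit_fraction_sum_map_times emb_eq_0_iff field_simps)
  with t ds(1) show "x \<in> recip_compl"
    unfolding mem_recip_compl_iff by (intro exI[of _ "map ((*) t) ds"]) auto
qed

lemma recip_compl_least:
  assumes F: "factroid (\<lambda>a x. emb a * x) (reg :: 'a::idom set) F" and one: "1 \<in> F"
  shows "recip_compl \<subseteq> F"
proof
  have "unit_fraction_sum ds \<in> F" if "\<forall>d\<in>set ds. d \<noteq> 0" for ds :: "'a list"
    using that
  proof (induction ds)
    case Nil
    with F show ?case by (simp add: factroid_zero)
  next
    case (Cons d ds)
    then have "emb d * inverse (emb d) \<in> F" "d \<in> reg"
      using one by (simp_all add: emb_eq_0_iff reg_eq_nonzero)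
    then have "inverse (emb d) \<in> F"
      by (rule factroid_cancel[OF F, rotated])
    with Cons F show ?case by (simp add: factroid_add)
  qed
  then show "x \<in> F" if "x \<in> recip_compl" for x
    using that unfolding mem_recip_compl_iff by blast
qed

lemma recip_compl_eq_factroid_gen:
  "(recip_compl :: 'a::idom fract set) = factroid_gen (\<lambda>a x. emb a * x) (reg :: 'a set) {1}"
proof
  show "recip_compl \<subseteq> factroid_gen (\<lambda>a x. emb a * x) (reg :: 'a set) {1}"
    by (rule recip_compl_least[OF factroid_factroid_gen]) (simp add: subset_factroid_gen[THEN subsetD])
  show "factroid_gen (\<lambda>a x. emb a * x) (reg :: 'a set) {1} \<subseteq> recip_compl"
    by (rule factroid_gen_least[OF factroid_recip_compl]) (simp add: one_mem_recip_compl)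
qed

lemma recip_compl_eq_UNIV_iff:
  "(recip_compl :: 'a::idom fract set) = UNIV \<longleftrightarrow> emb -` recip_compl = (UNIV :: 'a set)"
proof
  assume A: "emb -` recip_compl = (UNIV :: 'a set)"
  have "x \<in> recip_compl" for x :: "'a fract"
  proof (cases x)
    case (Fract a b)
    then have "emb b * x = emb a" "b \<in> reg"
      by (simp_all add: Fract_eq_emb_divide emb_eq_0_iff reg_eq_nonzero)
    moreover have "emb a \<in> recip_compl"
      using A by blast
    ultimately show ?thesis
      using factroid_cancel[OF factroid_recip_compl] by metis
  qed
  then show "(recip_compl :: 'a fract set) = UNIV" by blast
qed auto

lemma factroid_egyptian: "factroid (*) reg (emb -` recip_compl :: 'a::idom set)"
  by (rule factroid_vimage[OF factroid_recip_compl]) (simp_all add: emb_add emb_mult)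

lemma factroid_gen_times_subset:
  fixes h :: "'a::idom"
  assumes h: "h \<noteq> 0" and F: "F \<subseteq> emb -` recip_compl"
  shows "factroid_gen (*) reg ((*) h ` F) \<subseteq> (\<lambda>y. emb y / emb h) -` recip_compl"
proof (rule factroid_gen_least)
  show "factroid (*) reg ((\<lambda>y. emb y / emb h) -` recip_compl)"
    by (rule factroid_vimage[OF factroid_recip_compl]) (simp_all add: emb_add emb_mult add_divide_distrib)
  show "(*) h ` F \<subseteq> (\<lambda>y. emb y / emb h) -` recip_compl"
    using h F by (auto simp: emb_mult emb_eq_0_iff)
qed

lemma factroid_regular_egyptian: "factroid_regular (*) reg reg (emb -` recip_compl :: 'a::idom set)"
  unfolding factroid_regular_def
proof (intro ballI allI impI)
  fix h x :: 'a
  assume "h \<in> reg" "h * x \<in> factroid_gen (*) reg ((*) h ` (emb -` recip_compl))"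
  with factroid_gen_times_subset[of h "emb -` recip_compl"]
  show "x \<in> emb -` recip_compl"
    by (auto simp: reg_eq_nonzero emb_mult emb_eq_0_iff)
qed

lemma G_one_subset_egyptian: "G_one (reg :: 'a::idom set) \<subseteq> emb -` recip_compl"
  using G_one_least[OF factroid_regular_egyptian] one_mem_recip_compl by (simp add: emb_1)

lemma unit_fraction_sum_times_mem_factroid_gen:
  assumes "\<forall>d\<in>set ds. d \<noteq> 0"
  shows "\<exists>h y. (h::'a::idom) \<noteq> 0 \<and> y \<in> factroid_gen (*) reg {h} \<and> emb y = emb h * unit_fraction_sum ds"
  using assms
proof (induction ds)
  case Nil
  have "0 \<in> factroid_gen (*) reg {1::'a}"
    by (rule factroid_zero[OF factroid_factroid_gen])
  then show ?case by (intro exI[of _ 1] exI[of _ 0]) (simp add: emb_def Zero_fract_def)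
next
  case (Cons d ds)
  then obtain h y where h: "h \<noteq> 0" and y: "y \<in> factroid_gen (*) reg {h}"
    and y_eq: "emb y = emb h * unit_fraction_sum ds" and d: "d \<noteq> 0"
    by auto
  let ?G = "factroid_gen (*) reg {d * h}"
  have "h \<in> ?G"
    using d by (intro mem_factroid_gen_singleton_factor) (simp add: reg_eq_nonzero)
  moreover have "d * y \<in> ?G"
    using factroid_gen_singleton_times y by blast
  ultimately have "h + d * y \<in> ?G"
    by (rule factroid_add[OF factroid_factroid_gen])
  moreover have "emb (h + d * y) = emb (d * h) * unit_fraction_sum (d # ds)"
    using d y_eq by (simp add: emb_add emb_mult emb_eq_0_iff field_simps)
  ultimately show ?case
    using d h by (intro exI[of _ "d * h"] exI[of _ "h + d * y"]) simp
qed

lemma egyptian_subset_G_one: "emb -` recip_compl \<subseteq> G_one (reg :: 'a::idom set)"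
proof
  fix a :: 'a assume "a \<in> emb -` recip_compl"
  then obtain ds where "\<forall>d\<in>set ds. d \<noteq> 0" "emb a = unit_fraction_sum ds"
    by (auto simp: mem_recip_compl_iff)
  then obtain h y where "h \<noteq> 0" "y \<in> factroid_gen (*) reg {h}" "emb y = emb (h * a)"
    using unit_fraction_sum_times_mem_factroid_gen by (metis emb_mult)
  then show "a \<in> G_one reg"
    unfolding G_one_def by (auto simp: reg_eq_nonzero emb_eq_iff)
qed

lemma G_one_eq_egyptian: "G_one (reg :: 'a::idom set) = emb -` recip_compl"
  using G_one_subset_egyptian egyptian_subset_G_one by blast

lemma eq_singleton_UNIV_iff_least_eq_UNIV:
  assumes "S \<in> C" "\<forall>F\<in>C. S \<subseteq> F" "UNIV \<in> C"
  shows "C = {UNIV} \<longleftrightarrow> S = UNIV"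
  using assms by auto

theorem corollary7p11:
  fixes TYPE_A :: "'a::idom itself"
  shows "(egyptian_domain TYPE('a) \<longleftrightarrow>
            {F :: 'a set. factroid (*) reg F \<and> factroid_regular (*) reg reg F \<and> 1 \<in> F} = {UNIV})
       \<and> (egyptian_domain TYPE('a) \<longleftrightarrow>
            {F :: 'a fract set. factroid (\<lambda>a x. emb a * x) (reg :: 'a set) F \<and> 1 \<in> F} = {UNIV})
       \<and> G_one (reg :: 'a set) \<in> {F. factroid (*) reg F \<and> factroid_regular (*) reg reg F \<and> 1 \<in> F}
       \<and> (\<forall>F. factroid (*) reg F \<and> factroid_regular (*) reg reg F \<and> 1 \<in> F \<longrightarrow> G_one (reg :: 'a set) \<subseteq> F)
       \<and> {a :: 'a. emb a \<in> recip_compl} = G_one reg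
       \<and> (recip_compl :: 'a fract set) = factroid_gen (\<lambda>a x. emb a * x) (reg :: 'a set) {1}"
proof -
  let ?CA = "{F :: 'a set. factroid (*) reg F \<and> factroid_regular (*) reg reg F \<and> 1 \<in> F}"
  let ?CK = "{F :: 'a fract set. factroid (\<lambda>a x. emb a * x) (reg :: 'a set) F \<and> 1 \<in> F}"
  have egyptian: "egyptian_domain TYPE('a) \<longleftrightarrow> emb -` recip_compl = (UNIV :: 'a set)"
    by (auto simp: egyptian_domain_def)
  have G_mem: "G_one reg \<in> ?CA"
    using factroid_egyptian factroid_regular_egyptian one_mem_recip_compl
    by (simp add: G_one_eq_egyptian emb_1)
  have G_least: "\<forall>F\<in>?CA. G_one reg \<subseteq> F"
    using G_one_least by blast
  have "?CA = {UNIV} \<longleftrightarrow> G_one (reg :: 'a set) = UNIV"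
    using G_mem G_least by (rule eq_singleton_UNIV_iff_least_eq_UNIV)
      (simp add: factroid_UNIV factroid_regular_UNIV)
  then have A: "egyptian_domain TYPE('a) \<longleftrightarrow> ?CA = {UNIV}"
    by (simp add: egyptian G_one_eq_egyptian)
  have "?CK = {UNIV} \<longleftrightarrow> (recip_compl :: 'a fract set) = UNIV"
    by (rule eq_singleton_UNIV_iff_least_eq_UNIV)
      (simp_all add: factroid_recip_compl one_mem_recip_compl recip_compl_least factroid_UNIV)
  then have K: "egyptian_domain TYPE('a) \<longleftrightarrow> ?CK = {UNIV}"
    by (simp add: egyptian recip_compl_eq_UNIV_iff)
  have "{a :: 'a. emb a \<in> recip_compl} = G_one reg"
    by (simp add: G_one_eq_egyptian vimage_def)
  with A K G_mem G_least recip_compl_eq_factroid_gen show ?thesis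
    by blast
qed

end
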